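(* Let $G$ be a graph and $r$ a positive integer, and assume $G$ has a pair of vertices at distance between $2$ and $r$. For a choice of non-negative reals $y_{uv}$, one for each unordered pair $\{u,v\}$ of vertices at distance between $2$ and $r$ in $G$ (not all zero), set $x_u=\max_{z:uz\in E(G)}\sum_{v\in R_r(u,z)}y_{uv}$ for each $u\in V(G)$, and let $c$ be the maximum, over all such choices, of $\frac{\sum_{\{u,v\}:2\le d_G(u,v)\le r}y_{uv}}{\sum_{v\in V(G)}x_v}$. Then every fractional $r$-guidance system and every weak $r$-guidance system of $G$ has maximum outdegree at least $c$.
   Context: All graphs are finite, simple and undirected; $d_G$ is the distance in $G$. For $u,v$ at distance $\ell$, $\Gamma_G(u,v)$ is the set of neighbors of $u$ at distance $\ell-1$ from $v$. For an edge $uz$, $R_r(u,z)$ is the set of vertices $v$ with $2\le d_G(u,v)\le r$ and $z\in\Gamma_G(u,v)$. A partial orientation of $G$ is a directed graph $\vec{H}$ on $V(G)$ with every $(u,v)\in E(\vec{H})$ satisfying $uv\in E(G)$. $B_{\vec{H}}(v,a)$ is the set of vertices reachable from $v$ by a directed path of length at most $a$. A weak $r$-guidance system is a partial orientation $\vec{H}$ such that for any distinct $u,v$ at distance $\ell\le r$ there exist non-negative integers $a,b$ with $a+b=\ell-1$ such that $G$ has an edge between $B_{\vec{H}}(u,a)$ and $B_{\vec{H}}(v,b)$. A fractional orientation assigns a non-negative real $p(u,v)$ to each ordered pair of adjacent vertices; its maximum outdegree is $\max_u\sum_{v:uv\in E(G)}p(u,v)$. A fractional $r$-guidance system is a fractional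 orientation with $\sum_{y\in\Gamma_G(u,v)}p(u,y)+\sum_{y\in\Gamma_G(v,u)}p(v,y)\ge1$ for all $u,v$ with $2\le d_G(u,v)\le r$. *)

theory Defs
  imports Complex_Main "HOL-Library.Extended_Nat"
begin

definition sgraph :: "'a set \<Rightarrow> 'a set set \<Rightarrow> bool" where
  "sgraph V E \<longleftrightarrow> finite V \<and> (\<forall>e\<in>E. \<exists>u v. e = {u, v} \<and> u \<noteq> v \<and> u \<in> V \<and> v \<in> V)"

inductive walk_len :: "'a set set \<Rightarrow> nat \<Rightarrow> 'a \<Rightarrow> 'a \<Rightarrow> bool" for E where
  walk0: "walk_len E 0 u u"
| walkS: "{u, w} \<in> E \<Longrightarrow> walk_len E n w v \<Longrightarrow> walk_len E (Suc n) u v"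

text \<open>Graph distance (infinity if no walk exists).\<close>
definition gdist :: "'a set set \<Rightarrow> 'a \<Rightarrow> 'a \<Rightarrow> enat" where
  "gdist E u v = (INF n \<in> {n. walk_len E n u v}. enat n)"

definition Gamma :: "'a set set \<Rightarrow> 'a \<Rightarrow> 'a \<Rightarrow> 'a set" where
  "Gamma E u v = {y. {u, y} \<in> E \<and> eSuc (gdist E y v) = gdist E u v}"

definition Rset :: "'a set \<Rightarrow> 'a set set \<Rightarrow> nat \<Rightarrow> 'a \<Rightarrow> 'a \<Rightarrow> 'a set" where
  "Rset V E r u z = {v \<in> V. 2 \<le> gdist E u v \<and> gdist E u v \<le> enat r \<and> z \<in> Gamma E u v}"

definition far_pairs :: "'a set \<Rightarrow> 'a set set \<Rightarrow> nat \<Rightarrow> 'a set set" where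
  "far_pairs V E r = {{u, v} | u v. u \<in> V \<and> v \<in> V \<and> 2 \<le> gdist E u v \<and> gdist E u v \<le> enat r}"

text \<open>x_u = max over neighbours z of sum_{v in R_r(u,z)} y_{uv}
  (0 if u has no neighbours; all terms are non-negative).\<close>
definition xval :: "'a set \<Rightarrow> 'a set set \<Rightarrow> nat \<Rightarrow> ('a set \<Rightarrow> real) \<Rightarrow> 'a \<Rightarrow> real" where
  "xval V E r y u = Max (insert 0 {(\<Sum>v\<in>Rset V E r u z. y {u, v}) | z. z \<in> V \<and> {u, z} \<in> E})"

definition admissible_weights :: "'a set \<Rightarrow> 'a set set \<Rightarrow> nat \<Rightarrow> ('a set \<Rightarrow> real) \<Rightarrow> bool" where
  "admissible_weights V E r y \<longleftrightarrow> (\<forall>p\<in>far_pairs V E r. 0 \<le> y p) \<and> (\<exists>p\<in>far_pairs V E r. y p \<noteq> 0)"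

definition weight_ratio :: "'a set \<Rightarrow> 'a set set \<Rightarrow> nat \<Rightarrow> ('a set \<Rightarrow> real) \<Rightarrow> real" where
  "weight_ratio V E r y = (\<Sum>p\<in>far_pairs V E r. y p) / (\<Sum>v\<in>V. xval V E r y v)"

definition cval :: "'a set \<Rightarrow> 'a set set \<Rightarrow> nat \<Rightarrow> real" where
  "cval V E r = Sup {weight_ratio V E r y | y. admissible_weights V E r y}"

definition frac_orientation :: "'a set \<Rightarrow> 'a set set \<Rightarrow> ('a \<Rightarrow> 'a \<Rightarrow> real) \<Rightarrow> bool" where
  "frac_orientation V E p \<longleftrightarrow> (\<forall>u\<in>V. \<forall>v\<in>V. {u, v} \<in> E \<longrightarrow> 0 \<le> p u v)"

definition frac_max_outdeg :: "'a set \<Rightarrow> 'a set set \<Rightarrow> ('a \<Rightarrow> 'a \<Rightarrow> real) \<Rightarrow> real" where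
  "frac_max_outdeg V E p = Max ((\<lambda>u. \<Sum>v\<in>{v\<in>V. {u, v} \<in> E}. p u v) ` V)"

definition frac_guidance :: "'a set \<Rightarrow> 'a set set \<Rightarrow> nat \<Rightarrow> ('a \<Rightarrow> 'a \<Rightarrow> real) \<Rightarrow> bool" where
  "frac_guidance V E r p \<longleftrightarrow> frac_orientation V E p \<and>
     (\<forall>u\<in>V. \<forall>v\<in>V. 2 \<le> gdist E u v \<and> gdist E u v \<le> enat r \<longrightarrow>
        (\<Sum>y\<in>Gamma E u v. p u y) + (\<Sum>y\<in>Gamma E v u. p v y) \<ge> 1)"

definition partial_orientation :: "'a set \<Rightarrow> 'a set set \<Rightarrow> ('a \<times> 'a) set \<Rightarrow> bool" where
  "partial_orientation V E H \<longleftrightarrow> H \<subseteq> {(u, v). u \<in> V \<and> v \<in> V \<and> {u, v} \<in> E}"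

definition Bout :: "('a \<times> 'a) set \<Rightarrow> 'a \<Rightarrow> nat \<Rightarrow> 'a set" where
  "Bout H v a = {w. \<exists>n\<le>a. (v, w) \<in> H ^^ n}"

definition weak_guidance :: "'a set \<Rightarrow> 'a set set \<Rightarrow> nat \<Rightarrow> ('a \<times> 'a) set \<Rightarrow> bool" where
  "weak_guidance V E r H \<longleftrightarrow> partial_orientation V E H \<and>
     (\<forall>u\<in>V. \<forall>v\<in>V. \<forall>l. u \<noteq> v \<and> gdist E u v = enat l \<and> l \<le> r \<longrightarrow>
        (\<exists>a b. a + b = l - 1 \<and> (\<exists>x\<in>Bout H u a. \<exists>w\<in>Bout H v b. {x, w} \<in> E)))"

definition max_outdeg :: "'a set \<Rightarrow> ('a \<times> 'a) set \<Rightarrow> nat" where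
  "max_outdeg V H = Max ((\<lambda>u. card {v. (u, v) \<in> H}) ` V)"

end

theory Submission
  imports Defs
begin

text \<open>
  Let \<open>p\<close> be a fractional \<open>r\<close>-guidance system of maximum outdegree \<open>D\<close> and \<open>y\<close> admissible
  weights. Every far pair \<open>{u, v}\<close> is covered with total weight at least one by the arcs
  \<open>(u, z)\<close>, \<open>z \<in> \<Gamma>(u, v)\<close>, and \<open>(v, z)\<close>, \<open>z \<in> \<Gamma>(v, u)\<close>, so \<open>\<Sum> y\<close> is at most the sum of
  \<open>y\<^sub>u\<^sub>v p(u, z)\<close> over ordered far pairs \<open>(u, v)\<close> and \<open>z \<in> \<Gamma>(u, v)\<close>. Regrouping by the arc \<open>(u, z)\<close>,
  the coefficient of \<open>p(u, z)\<close> is the sum of \<open>y\<^sub>u\<^sub>v\<close> over \<open>v \<in> R\<^sub>r(u, z)\<close>, which is at most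
  \<open>x\<^sub>u\<close>; hence \<open>\<Sum> y \<le> D \<Sum> x\<close>. A weak guidance system, read as a 0/1 fractional orientation,
  is a fractional guidance system: the directed paths witnessing the weak condition for
  \<open>u, v\<close> together with the connecting edge form a shortest \<open>u\<close>-\<open>v\<close> walk, so its first arc
  points into \<open>\<Gamma>(u, v)\<close> or \<open>\<Gamma>(v, u)\<close>.
\<close>

lemma walk_len_snoc: "walk_len E n u w \<Longrightarrow> {w, v} \<in> E \<Longrightarrow> walk_len E (Suc n) u v"
  by (induction rule: walk_len.induct) (auto intro: walk_len.intros)

lemma walk_len_rev: "walk_len E n u v \<Longrightarrow> walk_len E n v u"
  by (induction rule: walk_len.induct) (auto intro: walk_len.intros walk_len_snoc simp: insert_commute)

lemma walk_len_append: "walk_len E n u w \<Longrightarrow> walk_len E m w v \<Longrightarrow> walk_len E (n + m) u v"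
  by (induction rule: walk_len.induct) (auto intro: walk_len.intros)

lemma gdist_le_walk_len: "walk_len E n u v \<Longrightarrow> gdist E u v \<le> enat n"
  unfolding gdist_def by (rule INF_lower2) auto

lemma walk_len_gdist:
  assumes "gdist E u v = enat l"
  shows "walk_len E l u v"
proof -
  have "{n. walk_len E n u v} \<noteq> {}"
  proof
    assume "{n. walk_len E n u v} = {}"
    with assms show False by (simp add: gdist_def top_enat_def)
  qed
  then obtain n where "walk_len E n u v" by auto
  define n0 where "n0 = (LEAST n. walk_len E n u v)"
  have walk: "walk_len E n0 u v"
    unfolding n0_def using \<open>walk_len E n u v\<close> by (rule LeastI)
  have "gdist E u v = enat n0"
  proof (rule antisym)
    show "gdist E u v \<le> enat n0" using walk by (rule gdist_le_walk_len)
    show "enat n0 \<le> gdist E u v"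
      unfolding gdist_def by (rule INF_greatest) (simp add: n0_def Least_le)
  qed
  with assms walk show ?thesis by simp
qed

lemma gdist_commute: "gdist E u v = gdist E v u"
  unfolding gdist_def using walk_len_rev by metis

lemma gdist_self: "gdist E u u = 0"
  using gdist_le_walk_len[OF walk_len.walk0[of E u]] by (simp add: zero_enat_def[symmetric])

lemma sgraph_edge_in_V: "sgraph V E \<Longrightarrow> {u, v} \<in> E \<Longrightarrow> u \<in> V \<and> v \<in> V"
  unfolding sgraph_def by (metis doubleton_eq_iff)

lemma Gamma_subset_neighbours: "sgraph V E \<Longrightarrow> Gamma E u v \<subseteq> {z \<in> V. {u, z} \<in> E}"
  unfolding Gamma_def using sgraph_edge_in_V by fastforce

lemma GammaI:
  assumes "{u, y} \<in> E" and "walk_len E k y v" and "gdist E u v = enat (Suc k)"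
  shows "y \<in> Gamma E u v"
proof -
  obtain k' where k': "gdist E y v = enat k'" "k' \<le> k"
    using gdist_le_walk_len[OF assms(2)] enat_ile by fastforce
  have "walk_len E (Suc k') u v"
    using assms(1) walk_len_gdist[OF k'(1)] by (rule walkS)
  then have "k' = k"
    using gdist_le_walk_len assms(3) k'(2) by fastforce
  then show ?thesis
    unfolding Gamma_def using assms(1,3) k' by (simp add: eSuc_enat)
qed

definition far_from :: "'a set \<Rightarrow> 'a set set \<Rightarrow> nat \<Rightarrow> 'a \<Rightarrow> 'a set" where
  "far_from V E r u = {v \<in> V. 2 \<le> gdist E u v \<and> gdist E u v \<le> enat r}"

lemma far_from_subset: "far_from V E r u \<subseteq> V"
  unfolding far_from_def by blast

lemma far_from_commute: "u \<in> V \<Longrightarrow> v \<in> far_from V E r u \<Longrightarrow> u \<in> far_from V E r v"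
  unfolding far_from_def by (simp add: gdist_commute)

lemma far_from_irrefl: "u \<notin> far_from V E r u"
  unfolding far_from_def by (simp add: gdist_self zero_enat_def numeral_eq_enat)

lemma far_pairs_eq_image: "far_pairs V E r = (\<lambda>(u, v). {u, v}) ` (SIGMA u:V. far_from V E r u)"
  unfolding far_pairs_def far_from_def by fastforce

lemma Rset_eq: "Rset V E r u z = {v \<in> far_from V E r u. z \<in> Gamma E u v}"
  unfolding Rset_def far_from_def by auto

lemma finite_xval_candidates:
  "finite V \<Longrightarrow> finite (insert 0 {(\<Sum>v\<in>Rset V E r u z. y {u, v}) | z. z \<in> V \<and> {u, z} \<in> E})"
  by (simp add: finite_image_set)

lemma xval_nonneg: "finite V \<Longrightarrow> 0 \<le> xval V E r y u"
  unfolding xval_def by (rule Max_ge[OF finite_xval_candidates]) auto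

lemma sum_Rset_le_xval:
  "finite V \<Longrightarrow> z \<in> V \<Longrightarrow> {u, z} \<in> E \<Longrightarrow> (\<Sum>v\<in>Rset V E r u z. y {u, v}) \<le> xval V E r y u"
  unfolding xval_def by (rule Max_ge[OF finite_xval_candidates]) auto

lemma sum_doubletons_le_sum_pairs:
  fixes w :: "'a set \<Rightarrow> 'b::linordered_semidom"
  assumes "finite S"
    and sym: "\<And>a b. (a, b) \<in> S \<Longrightarrow> (b, a) \<in> S"
    and irrefl: "\<And>a b. (a, b) \<in> S \<Longrightarrow> a \<noteq> b"
    and nonneg: "\<And>a b. (a, b) \<in> S \<Longrightarrow> 0 \<le> w {a, b}"
    and cover: "\<And>a b. (a, b) \<in> S \<Longrightarrow> 1 \<le> c a b + c b a"
  shows "(\<Sum>q\<in>(\<lambda>(a, b). {a, b}) ` S. w q) \<le> (\<Sum>(a, b)\<in>S. w {a, b} * c a b)"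
proof -
  let ?f = "\<lambda>(a, b). {a, b}" and ?g = "\<lambda>(a, b). w {a, b} * c a b"
  have "w q \<le> (\<Sum>x\<in>{x \<in> S. ?f x = q}. ?g x)" if "q \<in> ?f ` S" for q
  proof -
    obtain a b where ab: "(a, b) \<in> S" "q = {a, b}" using \<open>q \<in> ?f ` S\<close> by auto
    have "{x \<in> S. ?f x = q} = {(a, b), (b, a)}"
      using ab sym by (auto simp: doubleton_eq_iff)
    then have "(\<Sum>x\<in>{x \<in> S. ?f x = q}. ?g x) = w q * (c a b + c b a)"
      using ab irrefl by (simp add: insert_commute algebra_simps)
    then show ?thesis
      using ab nonneg cover by (metis mult_left_mono mult.right_neutral)
  qed
  then have "(\<Sum>q\<in>?f ` S. w q) \<le> (\<Sum>q\<in>?f ` S. \<Sum>x\<in>{x \<in> S. ?f x = q}. ?g x)"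
    by (rule sum_mono)
  also have "\<dots> = (\<Sum>x\<in>S. ?g x)"
    using \<open>finite S\<close> by (rule sum.image_gen[symmetric])
  finally show ?thesis .
qed

lemma sum_far_from_Gamma_eq:
  fixes y :: "'a set \<Rightarrow> 'b::semiring_0"
  assumes "sgraph V E"
  shows "(\<Sum>v\<in>far_from V E r u. y {u, v} * (\<Sum>z\<in>Gamma E u v. p u z))
       = (\<Sum>z\<in>{z \<in> V. {u, z} \<in> E}. (\<Sum>v\<in>Rset V E r u z. y {u, v}) * p u z)"
proof -
  let ?N = "{z \<in> V. {u, z} \<in> E}"
  have fin: "finite V" using assms by (simp add: sgraph_def)
  have Gamma_eq: "{z \<in> ?N. z \<in> Gamma E u v} = Gamma E u v" for v
    using Gamma_subset_neighbours[OF assms] by auto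
  have "(\<Sum>v\<in>far_from V E r u. y {u, v} * (\<Sum>z\<in>Gamma E u v. p u z))
      = (\<Sum>v\<in>far_from V E r u. \<Sum>z\<in>{z \<in> ?N. z \<in> Gamma E u v}. y {u, v} * p u z)"
    by (simp only: Gamma_eq sum_distrib_left)
  also have "\<dots> = (\<Sum>z\<in>?N. \<Sum>v\<in>{v \<in> far_from V E r u. z \<in> Gamma E u v}. y {u, v} * p u z)"
    using fin by (intro sum.swap_restrict) (auto simp: far_from_def)
  also have "\<dots> = (\<Sum>z\<in>?N. (\<Sum>v\<in>Rset V E r u z. y {u, v}) * p u z)"
    by (simp only: Rset_eq sum_distrib_right)
  finally show ?thesis .
qed

lemma outdeg_le_frac_max_outdeg:
  "finite V \<Longrightarrow> u \<in> V \<Longrightarrow> (\<Sum>v\<in>{v \<in> V. {u, v} \<in> E}. p u v) \<le> frac_max_outdeg V E p"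
  unfolding frac_max_outdeg_def by (rule Max_ge) auto

lemma frac_max_outdeg_nonneg:
  assumes "finite V" "u \<in> V" "frac_orientation V E p"
  shows "0 \<le> frac_max_outdeg V E p"
proof -
  have "0 \<le> (\<Sum>v\<in>{v \<in> V. {u, v} \<in> E}. p u v)"
    using assms(2,3) by (auto simp: frac_orientation_def intro: sum_nonneg)
  also have "\<dots> \<le> frac_max_outdeg V E p"
    using assms(1,2) by (rule outdeg_le_frac_max_outdeg)
  finally show ?thesis .
qed

lemma sum_far_pairs_le_frac_max_outdeg:
  fixes y :: "'a set \<Rightarrow> real"
  assumes G: "sgraph V E" and p: "frac_guidance V E r p"
    and y: "\<And>q. q \<in> far_pairs V E r \<Longrightarrow> 0 \<le> y q"
  shows "(\<Sum>q\<in>far_pairs V E r. y q) \<le> frac_max_outdeg V E p * (\<Sum>u\<in>V. xval V E r y u)"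
proof -
  let ?S = "SIGMA u:V. far_from V E r u" and ?N = "\<lambda>u. {z \<in> V. {u, z} \<in> E}"
    and ?D = "frac_max_outdeg V E p"
  have fin: "finite V" using G by (simp add: sgraph_def)
  have p_nonneg: "u \<in> V \<Longrightarrow> z \<in> ?N u \<Longrightarrow> 0 \<le> p u z" for u z
    using p by (auto simp: frac_guidance_def frac_orientation_def)
  have "(\<Sum>q\<in>far_pairs V E r. y q) \<le> (\<Sum>(u, v)\<in>?S. y {u, v} * (\<Sum>z\<in>Gamma E u v. p u z))"
    unfolding far_pairs_eq_image
  proof (rule sum_doubletons_le_sum_pairs)
    show "finite ?S" using fin by (auto simp: far_from_def)
    show "(a, b) \<in> ?S \<Longrightarrow> (b, a) \<in> ?S" for a b
      by (auto intro: far_from_commute dest: far_from_subset[THEN subsetD])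
    show "(a, b) \<in> ?S \<Longrightarrow> a \<noteq> b" for a b
      using far_from_irrefl by fastforce
    show "(a, b) \<in> ?S \<Longrightarrow> 0 \<le> y {a, b}" for a b
      using y unfolding far_pairs_eq_image by blast
    show "(a, b) \<in> ?S \<Longrightarrow> 1 \<le> (\<Sum>z\<in>Gamma E a b. p a z) + (\<Sum>z\<in>Gamma E b a. p b z)" for a b
      using p by (auto simp: frac_guidance_def far_from_def)
  qed
  also have "\<dots> = (\<Sum>u\<in>V. \<Sum>v\<in>far_from V E r u. y {u, v} * (\<Sum>z\<in>Gamma E u v. p u z))"
    using fin by (subst sum.Sigma) (auto simp: far_from_def)
  also have "\<dots> = (\<Sum>u\<in>V. \<Sum>z\<in>?N u. (\<Sum>v\<in>Rset V E r u z. y {u, v}) * p u z)"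
    by (simp only: sum_far_from_Gamma_eq[OF G])
  also have "\<dots> \<le> (\<Sum>u\<in>V. \<Sum>z\<in>?N u. xval V E r y u * p u z)"
    using fin p_nonneg sum_Rset_le_xval
    by (intro sum_mono mult_right_mono) auto
  also have "\<dots> \<le> (\<Sum>u\<in>V. xval V E r y u * ?D)"
  proof (rule sum_mono)
    fix u assume "u \<in> V"
    have "(\<Sum>z\<in>?N u. xval V E r y u * p u z) = xval V E r y u * (\<Sum>z\<in>?N u. p u z)"
      by (simp add: sum_distrib_left)
    also have "\<dots> \<le> xval V E r y u * ?D"
      using outdeg_le_frac_max_outdeg[OF fin \<open>u \<in> V\<close>] xval_nonneg[OF fin]
      by (rule mult_left_mono)
    finally show "(\<Sum>z\<in>?N u. xval V E r y u * p u z) \<le> xval V E r y u * ?D" .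
  qed
  also have "\<dots> = ?D * (\<Sum>u\<in>V. xval V E r y u)"
    by (simp add: sum_distrib_left mult.commute)
  finally show ?thesis .
qed

lemma cval_le_frac_max_outdeg:
  assumes G: "sgraph V E" and "far_pairs V E r \<noteq> {}" and p: "frac_guidance V E r p"
  shows "cval V E r \<le> frac_max_outdeg V E p"
  unfolding cval_def
proof (rule cSup_least)
  have "admissible_weights V E r (\<lambda>_. 1)"
    using assms(2) by (auto simp: admissible_weights_def)
  then show "{weight_ratio V E r y | y. admissible_weights V E r y} \<noteq> {}" by blast
next
  fix t assume "t \<in> {weight_ratio V E r y | y. admissible_weights V E r y}"
  then obtain y where y: "admissible_weights V E r y" and t: "t = weight_ratio V E r y" by blast
  let ?D = "frac_max_outdeg V E p" and ?X = "\<Sum>u\<in>V. xval V E r y u"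
  have fin: "finite V" using G by (simp add: sgraph_def)
  obtain u where "u \<in> V"
    using assms(2) unfolding far_pairs_eq_image by blast
  \<comment> \<open>\<open>0 \<le> ?D\<close> covers the case \<open>?X = 0\<close>, where the ratio is \<open>0\<close> since \<open>x / 0 = 0\<close>\<close>
  then have "0 \<le> ?D"
    using fin p by (auto simp: frac_guidance_def intro: frac_max_outdeg_nonneg)
  moreover have "0 \<le> ?X"
    using fin by (simp add: sum_nonneg xval_nonneg)
  moreover have "(\<Sum>q\<in>far_pairs V E r. y q) \<le> ?D * ?X"
    using y by (intro sum_far_pairs_le_frac_max_outdeg[OF G p]) (simp add: admissible_weights_def)
  ultimately show "t \<le> ?D"
    unfolding t weight_ratio_def by (auto simp: divide_le_eq)
qed

lemma relpow_walk_len: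
  assumes "partial_orientation V E H"
  shows "(u, x) \<in> H ^^ n \<Longrightarrow> walk_len E n u x"
proof (induction n arbitrary: u)
  case 0
  then show ?case by (auto intro: walk0)
next
  case (Suc n)
  then obtain y where "(u, y) \<in> H" "(y, x) \<in> H ^^ n" by (blast dest: relpow_Suc_D2)
  with Suc.IH assms show ?case by (auto simp: partial_orientation_def intro: walkS)
qed

lemma first_arc_in_Gamma:
  assumes H: "partial_orientation V E H" and "(u, x) \<in> H ^^ Suc m"
    and "walk_len E k x v" and "gdist E u v = enat (Suc (m + k))"
  shows "\<exists>y. (u, y) \<in> H \<and> y \<in> Gamma E u v"
proof -
  obtain y where y: "(u, y) \<in> H" "(y, x) \<in> H ^^ m"
    using assms(2) by (blast dest: relpow_Suc_D2)
  have "walk_len E (m + k) y v"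
    using relpow_walk_len[OF H y(2)] assms(3) by (rule walk_len_append)
  moreover have "{u, y} \<in> E"
    using H y(1) by (auto simp: partial_orientation_def)
  ultimately have "y \<in> Gamma E u v"
    using assms(4) by (blast intro: GammaI)
  with y(1) show ?thesis by blast
qed

lemma weak_guidance_first_arc_in_Gamma:
  assumes H: "weak_guidance V E r H" and "u \<in> V" "v \<in> V"
    and l: "gdist E u v = enat l" "2 \<le> l" "l \<le> r"
  shows "(\<exists>y. (u, y) \<in> H \<and> y \<in> Gamma E u v) \<or> (\<exists>y. (v, y) \<in> H \<and> y \<in> Gamma E v u)"
proof -
  have PO: "partial_orientation V E H" using H by (simp add: weak_guidance_def)
  have "u \<noteq> v" using l by (auto simp: gdist_self zero_enat_def)
  then obtain a b x w where ab: "a + b = l - 1" and "x \<in> Bout H u a" "w \<in> Bout H v b"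
    and xw: "{x, w} \<in> E"
    using H assms(2,3) l unfolding weak_guidance_def by blast
  then obtain n1 n2 where n: "n1 \<le> a" "n2 \<le> b" and ux: "(u, x) \<in> H ^^ n1" and vw: "(v, w) \<in> H ^^ n2"
    unfolding Bout_def by blast
  have xv: "walk_len E (Suc n2) x v"
    using xw walk_len_rev[OF relpow_walk_len[OF PO vw]] by (rule walkS)
  have "gdist E u v \<le> enat (n1 + Suc n2)"
    using walk_len_append[OF relpow_walk_len[OF PO ux] xv] by (rule gdist_le_walk_len)
  then have len: "l = n1 + Suc n2"
    using l n ab by simp
  show ?thesis
  proof (cases n1)
    case (Suc m)
    then show ?thesis
      using first_arc_in_Gamma[OF PO _ xv] ux l(1) len by auto
  next
    case 0
    then have "x = u" using ux by simp
    then have "walk_len E (Suc 0) w u"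
      using walkS[OF _ walk0, of w u] xw by (simp add: insert_commute)
    moreover obtain m where "n2 = Suc m"
      using len l(2) 0 by (cases n2) auto
    ultimately show ?thesis
      using first_arc_in_Gamma[OF PO _ _ , of v w m "Suc 0" u] vw l(1) len 0 by (simp add: gdist_commute)
  qed
qed

lemma frac_guidance_of_weak_guidance:
  assumes G: "sgraph V E" and H: "weak_guidance V E r H"
  shows "frac_guidance V E r (\<lambda>u v. of_bool ((u, v) \<in> H))"
  unfolding frac_guidance_def frac_orientation_def
proof (intro conjI ballI impI allI)
  fix u v assume "u \<in> V" "v \<in> V" and d: "2 \<le> gdist E u v \<and> gdist E u v \<le> enat r"
  then obtain l where l: "gdist E u v = enat l" "2 \<le> l" "l \<le> r"
    by (cases "gdist E u v") (auto simp: numeral_eq_enat)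
  have fin: "finite (Gamma E a b)" for a b
    using G by (auto simp: sgraph_def intro: finite_subset[OF Gamma_subset_neighbours])
  have one_le: "1 \<le> (\<Sum>z\<in>Gamma E a b. of_bool ((a, z) \<in> H) :: real)"
    if "(a, y) \<in> H" "y \<in> Gamma E a b" for a b y
    using member_le_sum[of y "Gamma E a b" "\<lambda>z. of_bool ((a, z) \<in> H) :: real"] fin that by simp
  have nonneg: "0 \<le> (\<Sum>z\<in>Gamma E a b. of_bool ((a, z) \<in> H) :: real)" for a b
    by (simp add: sum_nonneg)
  from weak_guidance_first_arc_in_Gamma[OF H \<open>u \<in> V\<close> \<open>v \<in> V\<close> l]
  show "1 \<le> (\<Sum>z\<in>Gamma E u v. of_bool ((u, z) \<in> H)) + (\<Sum>z\<in>Gamma E v u. of_bool ((v, z) \<in> H) :: real)"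
  proof (elim disjE exE conjE)
    fix y assume "(u, y) \<in> H" "y \<in> Gamma E u v"
    with one_le nonneg[of v u] show ?thesis by fastforce
  next
    fix y assume "(v, y) \<in> H" "y \<in> Gamma E v u"
    with one_le nonneg[of u v] show ?thesis by fastforce
  qed
qed simp

lemma frac_max_outdeg_of_bool_le_max_outdeg:
  assumes "finite V" "V \<noteq> {}" and H: "partial_orientation V E H"
  shows "frac_max_outdeg V E (\<lambda>u v. of_bool ((u, v) \<in> H)) \<le> real (max_outdeg V H)"
proof -
  have "(\<Sum>v\<in>{v \<in> V. {u, v} \<in> E}. of_bool ((u, v) \<in> H) :: real) \<le> real (max_outdeg V H)"
    if "u \<in> V" for u
  proof -
    have out_sub: "{v. (u, v) \<in> H} \<subseteq> V" using H by (auto simp: partial_orientation_def)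
    have "(\<Sum>v\<in>{v \<in> V. {u, v} \<in> E}. of_bool ((u, v) \<in> H) :: real)
        = real (card ({v \<in> V. {u, v} \<in> E} \<inter> {v. (u, v) \<in> H}))"
      using assms(1) by simp
    also have "\<dots> \<le> real (card {v. (u, v) \<in> H})"
      using out_sub assms(1) by (auto intro!: card_mono intro: finite_subset)
    also have "\<dots> \<le> real (max_outdeg V H)"
      unfolding max_outdeg_def using assms(1) that by (auto intro: Max_ge)
    finally show ?thesis .
  qed
  then show ?thesis
    unfolding frac_max_outdeg_def using assms(1,2) by simp
qed

theorem lemma28:
  fixes V :: "'a set" and E :: "'a set set" and r :: nat
  assumes "sgraph V E" and "r \<ge> 1"
    and "\<exists>u\<in>V. \<exists>v\<in>V. 2 \<le> gdist E u v \<and> gdist E u v \<le> enat r"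
  shows "(\<forall>p. frac_guidance V E r p \<longrightarrow> frac_max_outdeg V E p \<ge> cval V E r)
       \<and> (\<forall>H. weak_guidance V E r H \<longrightarrow> real (max_outdeg V H) \<ge> cval V E r)"
proof (intro conjI allI impI)
  have far: "far_pairs V E r \<noteq> {}"
    using assms(3) unfolding far_pairs_def by blast
  show "cval V E r \<le> frac_max_outdeg V E p" if "frac_guidance V E r p" for p
    using cval_le_frac_max_outdeg[OF assms(1) far that] .
  fix H assume H: "weak_guidance V E r H"
  have "cval V E r \<le> frac_max_outdeg V E (\<lambda>u v. of_bool ((u, v) \<in> H))"
    using cval_le_frac_max_outdeg[OF assms(1) far frac_guidance_of_weak_guidance[OF assms(1) H]] .
  also have "\<dots> \<le> real (max_outdeg V H)"
    using assms(1,3) H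
    by (intro frac_max_outdeg_of_bool_le_max_outdeg) (auto simp: sgraph_def weak_guidance_def)
  finally show "cval V E r \<le> real (max_outdeg V H)" .
qed

end
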